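(* Let $n\ge1$ be an integer, $I,\Lambda$ non-empty sets, $P$ a $\Lambda\times I$ matrix with entries in $\mathbb{Z}_{n}\cup\{\mathbf{0}\}$, and $S=M^{0}[\mathbb{Z}_{n};I,\Lambda;P]$. Let $A$ be a finite alphabet, $\varphi:A\to S$ any map, and $\bar\varphi:A^{+}\to S$ its unique extension to a semigroup morphism. Then the language $\mathbf{0}\bar\varphi^{-1}\subseteq A^{+}$ has generalised star-height $0$.
   Context: $\mathbb{Z}_n$ is the cyclic group of order $n$ written additively. For a group $G$, non-empty sets $I,\Lambda$ and a $\Lambda\times I$ matrix $P=(p_{\lambda i})$ with entries in $G\cup\{\mathbf{0}\}$ ($\mathbf{0}$ a new symbol), the Rees zero-matrix semigroup $M^{0}[G;I,\Lambda;P]$ is $(I\times G\times\Lambda)\cup\{\mathbf{0}\}$ with $(i,g,\lambda)(j,h,\mu)=(i,g\,p_{\lambda j}\,h,\mu)$ if $p_{\lambda j}\ne\mathbf{0}$, $=\mathbf{0}$ if $p_{\lambda j}=\mathbf{0}$, and $x\mathbf{0}=\mathbf{0}x=\mathbf{0}$. Generalised regular expressions over $A$: $\emptyset$, $\varepsilon$ and each letter are expressions; if $E,F$ are expressions so are $E\cup F$, $EF$, $E^{\ast}$, $E^{c}$ (complement in $A^{\ast}$). Star-height: $h(\emptyset)=h(\varepsilon)=h(a)=0$, $h(E\cup F)=h(EF)=\max\{h(E),h(F)\}$, $h(E^{\ast})=h(E)+1$, $h(E^{c})=h(E)$; the star-height of a language is the minimum of $h(E)$ over expressions $E$ representing it.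 *)

theory Defs
  imports Main
begin

text \<open>Z_n is represented by the naturals {0..<n} with addition modulo n.
  An element of M0[Z_n; I, Lambda; P] is either None (the zero 0) or
  Some (i, g, lam) with i in I, g < n, lam in Lambda.
  The sandwich matrix P maps (lam, i) to None (the symbol 0) or Some g with g < n.\<close>

type_synonym ('i, 'l) rees_elt = "('i \<times> nat \<times> 'l) option"

definition rees_carrier :: "nat \<Rightarrow> 'i set \<Rightarrow> 'l set \<Rightarrow> ('i, 'l) rees_elt set" where
  "rees_carrier n I L = {None} \<union> Some ` (I \<times> {..<n} \<times> L)"

fun rees_mult :: "nat \<Rightarrow> ('l \<Rightarrow> 'i \<Rightarrow> nat option) \<Rightarrow>
    ('i, 'l) rees_elt \<Rightarrow> ('i, 'l) rees_elt \<Rightarrow> ('i, 'l) rees_elt" where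
  "rees_mult n P (Some (i, g, lam)) (Some (j, h, mu)) =
     (case P lam j of
        None \<Rightarrow> None
      | Some p \<Rightarrow> Some (i, (g + p + h) mod n, mu))"
| "rees_mult n P _ _ = None"

definition sandwich_ok :: "nat \<Rightarrow> 'i set \<Rightarrow> 'l set \<Rightarrow> ('l \<Rightarrow> 'i \<Rightarrow> nat option) \<Rightarrow> bool" where
  "sandwich_ok n I L P \<longleftrightarrow> (\<forall>lam\<in>L. \<forall>i\<in>I. \<forall>g. P lam i = Some g \<longrightarrow> g < n)"

text \<open>The unique extension of phi : A -> S to a semigroup morphism A^+ -> S,
  evaluated on non-empty words (the value on [] is irrelevant and fixed to None).\<close>

fun word_eval :: "nat \<Rightarrow> ('l \<Rightarrow> 'i \<Rightarrow> nat option) \<Rightarrow> ('a \<Rightarrow> ('i, 'l) rees_elt) \<Rightarrow>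
    'a list \<Rightarrow> ('i, 'l) rees_elt" where
  "word_eval n P phi [] = None"
| "word_eval n P phi (a # w) = foldl (rees_mult n P) (phi a) (map phi w)"

datatype 'a gre =
    GEmpty
  | GEps
  | GLetter 'a
  | GUnion "'a gre" "'a gre"
  | GConc "'a gre" "'a gre"
  | GStar "'a gre"
  | GCompl "'a gre"

fun gre_over :: "'a set \<Rightarrow> 'a gre \<Rightarrow> bool" where
  "gre_over A GEmpty = True"
| "gre_over A GEps = True"
| "gre_over A (GLetter a) = (a \<in> A)"
| "gre_over A (GUnion E F) = (gre_over A E \<and> gre_over A F)"
| "gre_over A (GConc E F) = (gre_over A E \<and> gre_over A F)"
| "gre_over A (GStar E) = gre_over A E"
| "gre_over A (GCompl E) = gre_over A E"

definition lang_conc :: "'a list set \<Rightarrow> 'a list set \<Rightarrow> 'a list set" where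
  "lang_conc X Y = {u @ v | u v. u \<in> X \<and> v \<in> Y}"

inductive_set lang_star :: "'a list set \<Rightarrow> 'a list set" for X where
  star_nil: "[] \<in> lang_star X"
| star_app: "u \<in> X \<Longrightarrow> v \<in> lang_star X \<Longrightarrow> u @ v \<in> lang_star X"

text \<open>Language of an expression over alphabet A; complement is taken in A^*.\<close>

fun gre_lang :: "'a set \<Rightarrow> 'a gre \<Rightarrow> 'a list set" where
  "gre_lang A GEmpty = {}"
| "gre_lang A GEps = {[]}"
| "gre_lang A (GLetter a) = {[a]}"
| "gre_lang A (GUnion E F) = gre_lang A E \<union> gre_lang A F"
| "gre_lang A (GConc E F) = lang_conc (gre_lang A E) (gre_lang A F)"
| "gre_lang A (GStar E) = lang_star (gre_lang A E)"
| "gre_lang A (GCompl E) = lists A - gre_lang A E"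

fun star_height :: "'a gre \<Rightarrow> nat" where
  "star_height GEmpty = 0"
| "star_height GEps = 0"
| "star_height (GLetter a) = 0"
| "star_height (GUnion E F) = max (star_height E) (star_height F)"
| "star_height (GConc E F) = max (star_height E) (star_height F)"
| "star_height (GStar E) = star_height E + 1"
| "star_height (GCompl E) = star_height E"

definition lang_star_height :: "'a set \<Rightarrow> 'a list set \<Rightarrow> nat" where
  "lang_star_height A L = (LEAST h. \<exists>E. gre_over A E \<and> gre_lang A E = L \<and> star_height E = h)"

end

theory Submission
  imports Defs "HOL-Library.Sublist"
begin

text \<open>In a Rees zero-matrix semigroup, whether a product (i, g, lam)(j, h, mu) is zero
  depends only on the sandwich entry p(lam, j), and a non-zero product has the outer
  indices i and mu. Hence a product s1 ... sk is zero iff some si is zero or some adjacent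
  product si s(i+1) is zero. So the preimage of zero is the finite union of the languages
  A* a A* with a phi = 0 and A* a b A* with (a phi)(b phi) = 0, and A* is the complement
  of the empty language.\<close>

lemma rees_mult_None_right [simp]: "rees_mult n P x None = None"
  by (cases x) auto

lemma rees_mult_eq_SomeD:
  "rees_mult n P x y = Some (i, g, mu) \<Longrightarrow> \<exists>j h. y = Some (j, h, mu)"
  by (cases "(n, P, x, y)" rule: rees_mult.cases) (auto split: option.splits)

lemma rees_mult_Some_left_eq_None_iff:
  "rees_mult n P (Some (i, g, lam)) z = None \<longleftrightarrow> rees_mult n P (Some (i', g', lam)) z = None"
  by (cases z) (auto split: option.splits)

lemma word_eval_snoc:
  "w \<noteq> [] \<Longrightarrow> word_eval n P phi (w @ [b]) = rees_mult n P (word_eval n P phi w) (phi b)"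
  by (cases w) auto

lemma word_eval_eq_SomeD:
  assumes "w \<noteq> []" and "word_eval n P phi w = Some (i, g, mu)"
  shows "\<exists>j h. phi (last w) = Some (j, h, mu)"
  using assms
proof (induction w arbitrary: i g rule: rev_induct)
  case (snoc b w)
  then show ?case
    by (cases "w = []") (auto simp: word_eval_snoc dest: rees_mult_eq_SomeD)
qed simp

lemma word_eval_snoc_eq_None_iff:
  assumes "w \<noteq> []"
  shows "word_eval n P phi (w @ [b]) = None \<longleftrightarrow>
     word_eval n P phi w = None \<or> rees_mult n P (phi (last w)) (phi b) = None"
proof (cases "word_eval n P phi w")
  case (Some x)
  then obtain i g mu where eval: "word_eval n P phi w = Some (i, g, mu)"
    by (cases x) auto
  moreover obtain j h where "phi (last w) = Some (j, h, mu)"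
    using word_eval_eq_SomeD[OF assms eval] by blast
  ultimately show ?thesis
    using rees_mult_Some_left_eq_None_iff by (simp add: word_eval_snoc[OF assms])
qed (simp add: word_eval_snoc[OF assms])

definition zero_factor ::
    "nat \<Rightarrow> ('l \<Rightarrow> 'i \<Rightarrow> nat option) \<Rightarrow> ('a \<Rightarrow> ('i, 'l) rees_elt) \<Rightarrow> 'a list \<Rightarrow> bool" where
  "zero_factor n P phi z \<longleftrightarrow>
     (\<exists>a. z = [a] \<and> phi a = None) \<or> (\<exists>a b. z = [a, b] \<and> rees_mult n P (phi a) (phi b) = None)"

lemma not_zero_factor_Nil [simp]: "\<not> zero_factor n P phi []"
  by (simp add: zero_factor_def)

lemma zero_factor_length: "zero_factor n P phi z \<Longrightarrow> length z \<le> 2"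
  by (auto simp: zero_factor_def)

lemma suffix_singleton: "suffix [c] w \<longleftrightarrow> w \<noteq> [] \<and> last w = c"
  by (cases w rule: rev_cases) auto

lemma sublist_snoc_length_le_2:
  assumes "length z \<le> 2"
  shows "sublist z (w @ [b]) \<longleftrightarrow>
    sublist z w \<or> z = [] \<or> z = [b] \<or> (w \<noteq> [] \<and> z = [last w, b])"
proof -
  have "suffix z (w @ [b]) \<longleftrightarrow> z = [] \<or> z = [b] \<or> (w \<noteq> [] \<and> z = [last w, b])"
    using assms
    by (cases z rule: rev_cases) (auto simp: suffix_singleton le_Suc_eq length_Suc_conv)
  then show ?thesis
    by (auto simp: sublist_snoc)
qed

lemma word_eval_eq_None_iff:
  "w \<noteq> [] \<Longrightarrow> word_eval n P phi w = None \<longleftrightarrow> (\<exists>z. zero_factor n P phi z \<and> sublist z w)"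
proof (induction w rule: rev_induct)
  case (snoc b w)
  show ?case
  proof (cases "w = []")
    case True
    then show ?thesis
      by (auto simp: zero_factor_def sublist_Cons_right)
  next
    case False
    have "(\<exists>z. zero_factor n P phi z \<and> sublist z (w @ [b])) \<longleftrightarrow>
        (\<exists>z. zero_factor n P phi z \<and> sublist z w) \<or>
        zero_factor n P phi [b] \<or> zero_factor n P phi [last w, b]"
      using False
      by (auto simp: sublist_snoc_length_le_2 zero_factor_length simp del: sublist_append_leftI
          intro: exI[of _ "[b]"] exI[of _ "[last w, b]"])
    then have "(\<exists>z. zero_factor n P phi z \<and> sublist z (w @ [b])) \<longleftrightarrow>
        (\<exists>z. zero_factor n P phi z \<and> sublist z w) \<or> phi b = None \<or>
        rees_mult n P (phi (last w)) (phi b) = None"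
      by (auto simp: zero_factor_def)
    then show ?thesis
      using False snoc.IH by (auto simp: word_eval_snoc_eq_None_iff)
  qed
qed simp

definition gre_word :: "'a list \<Rightarrow> 'a gre" where
  "gre_word x = foldr (\<lambda>a E. GConc (GLetter a) E) x GEps"

definition gre_factor :: "'a list \<Rightarrow> 'a gre" where
  "gre_factor x = GConc (GCompl GEmpty) (GConc (gre_word x) (GCompl GEmpty))"

definition gre_Union :: "'a gre list \<Rightarrow> 'a gre" where
  "gre_Union Es = foldr GUnion Es GEmpty"

lemma gre_lang_word: "gre_lang A (gre_word x) = {x}"
  by (induction x) (auto simp: gre_word_def lang_conc_def)

lemma gre_over_word: "set x \<subseteq> A \<Longrightarrow> gre_over A (gre_word x)"
  by (induction x) (auto simp: gre_word_def)

lemma star_height_word: "star_height (gre_word x) = 0"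
  by (induction x) (auto simp: gre_word_def)

lemma gre_lang_factor:
  assumes "set x \<subseteq> A"
  shows "gre_lang A (gre_factor x) = {w \<in> lists A. sublist x w}"
proof -
  have "gre_lang A (gre_factor x) = {u @ x @ v | u v. u \<in> lists A \<and> v \<in> lists A}"
    by (auto simp: gre_factor_def gre_lang_word lang_conc_def)
  also have "\<dots> = {w \<in> lists A. sublist x w}"
    using assms by (auto simp: sublist_def) blast
  finally show ?thesis .
qed

lemma gre_over_factor: "set x \<subseteq> A \<Longrightarrow> gre_over A (gre_factor x)"
  by (simp add: gre_factor_def gre_over_word)

lemma star_height_factor: "star_height (gre_factor x) = 0"
  by (simp add: gre_factor_def star_height_word)

lemma gre_lang_Union: "gre_lang A (gre_Union Es) = (\<Union>E\<in>set Es. gre_lang A E)"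
  by (induction Es) (auto simp: gre_Union_def)

lemma gre_over_Union: "(\<And>E. E \<in> set Es \<Longrightarrow> gre_over A E) \<Longrightarrow> gre_over A (gre_Union Es)"
  by (induction Es) (auto simp: gre_Union_def)

lemma star_height_Union:
  "(\<And>E. E \<in> set Es \<Longrightarrow> star_height E = 0) \<Longrightarrow> star_height (gre_Union Es) = 0"
  by (induction Es) (auto simp: gre_Union_def)

lemma star_free_lang_contains_factor:
  assumes "finite Z" and "Z \<subseteq> lists A"
  shows "\<exists>E. gre_over A E \<and> star_height E = 0 \<and>
    gre_lang A E = {w \<in> lists A. \<exists>z\<in>Z. sublist z w}"
proof -
  obtain zs where zs: "set zs = Z"
    using finite_list[OF assms(1)] by blast
  define E where "E = gre_Union (map gre_factor zs)"
  have "gre_lang A E = (\<Union>z\<in>Z. gre_lang A (gre_factor z))"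
    by (auto simp: E_def gre_lang_Union zs)
  also have "\<dots> = {w \<in> lists A. \<exists>z\<in>Z. sublist z w}"
  proof -
    have "gre_lang A (gre_factor z) = {w \<in> lists A. sublist z w}" if "z \<in> Z" for z
      using that assms(2) by (auto intro!: gre_lang_factor)
    then show ?thesis
      by auto
  qed
  finally have "gre_lang A E = {w \<in> lists A. \<exists>z\<in>Z. sublist z w}" .
  moreover have "gre_over A E" "star_height E = 0"
    using assms(2) zs
    by (force simp: E_def star_height_factor intro!: gre_over_Union star_height_Union gre_over_factor)+
  ultimately show ?thesis
    by blast
qed

theorem lemma3p1:
  fixes n :: nat and I :: "'i set" and L :: "'l set"
    and P :: "'l \<Rightarrow> 'i \<Rightarrow> nat option"
    and A :: "'a set" and phi :: "'a \<Rightarrow> ('i, 'l) rees_elt"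
  assumes "n \<ge> 1" and "I \<noteq> {}" and "L \<noteq> {}"
    and "sandwich_ok n I L P"
    and "finite A"
    and "\<forall>a\<in>A. phi a \<in> rees_carrier n I L"
  shows "\<exists>E. gre_over A E \<and> star_height E = 0 \<and>
      gre_lang A E = {w \<in> lists A. w \<noteq> [] \<and> word_eval n P phi w = None}"
proof -
  define Z where "Z = {z \<in> lists A. zero_factor n P phi z}"
  have "finite Z"
    using finite_lists_length_le[OF \<open>finite A\<close>, of 2]
    by (rule rev_finite_subset) (auto simp: Z_def zero_factor_length)
  moreover have "{w \<in> lists A. \<exists>z\<in>Z. sublist z w} =
      {w \<in> lists A. w \<noteq> [] \<and> word_eval n P phi w = None}"
  proof -
    have "(\<exists>z\<in>Z. sublist z w) \<longleftrightarrow> w \<noteq> [] \<and> word_eval n P phi w = None"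
      if "w \<in> lists A" for w
      using that set_mono_sublist[of _ w]
      by (cases "w = []") (auto simp: Z_def word_eval_eq_None_iff)
    then show ?thesis
      by blast
  qed
  ultimately show ?thesis
    using star_free_lang_contains_factor[of Z A] by (auto simp: Z_def)
qed

end
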